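(* Let $f:\mathbb{R}\to\mathbb{R}^T$ be a function each of whose outputs $f_t$ is continuous piecewise linear and interpolates the dataset $\mathcal{D}_t=\{(x_i,y_{it})\}_{i=1}^N$. Suppose that at some point $\tilde x$ lying strictly between consecutive data points, one or more of the outputs $f_t$ has a knot. Let $\tilde x_1<\tilde x<\tilde x_2$ be the closest knots of $f$ (in any output) before and after $\tilde x$, let $\tau=\frac{\tilde x-\tilde x_1}{\tilde x_2-\tilde x_1}$, and suppose the slopes of each $f_t$ are: $a_t$ immediately to the left of $\tilde x_1$, $b_t+\delta_t$ on $(\tilde x_1,\tilde x)$, $b_t-\frac{\tau}{1-\tau}\delta_t$ on $(\tilde x,\tilde x_2)$, and $c_t$ immediately to the right of $\tilde x_2$. Let $\mathbf{a},\mathbf{b},\mathbf{c},\boldsymbol\delta\in\mathbb{R}^T$ collect these values. Then replacing $f$ on $[\tilde x_1,\tilde x_2]$ by the straight line connecting $f(\tilde x_1)$ and $f(\tilde x_2)$ (i.e., removing the knot at $\tilde x$) does not increase $R(f)$. Furthermore, if $\mathbf{a}-\mathbf{b}$ and $\mathbf{b}-\mathbf{c}$ are not aligned, doing so strictly decreases $R(f)$.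
   Context: Networks: $f_\theta(x)=\sum_{k=1}^K \mathbf{v}_k(w_kx+b_k)_+ + \mathbf{a}_0x+\mathbf{c}_0$ with $w_k,b_k\in\mathbb{R}$, $\mathbf{v}_k,\mathbf{a}_0,\mathbf{c}_0\in\mathbb{R}^T$, $K$ a fixed width, $(z)_+=\max\{0,z\}$. The representational cost of a function $f:\mathbb{R}\to\mathbb{R}^T$ is $R(f)=\inf_\theta \sum_{k=1}^K\|\mathbf{v}_k\|_2$ subject to $|w_k|=1$ for all $k$ and $f=f_\theta$. A knot of $f_t$ is a point where the slope of $f_t$ changes. Two vectors $\mathbf{u}_1,\mathbf{u}_2$ are aligned if $\mathbf{u}_1^\top\mathbf{u}_2=\|\mathbf{u}_1\|_2\|\mathbf{u}_2\|_2$. By construction the straight line from $(\tilde x_1,f_t(\tilde x_1))$ to $(\tilde x_2,f_t(\tilde x_2))$ has slope $b_t$. *)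

theory Defs
  imports "HOL-Analysis.Analysis"
begin

definition netfun ::
  "nat \<Rightarrow> (nat \<Rightarrow> real) \<Rightarrow> (nat \<Rightarrow> real) \<Rightarrow> (nat \<Rightarrow> real^'T) \<Rightarrow> real^'T \<Rightarrow> real^'T
     \<Rightarrow> real \<Rightarrow> real^'T" where
  "netfun K w b v a0 c0 x = (\<Sum>k<K. max 0 (w k * x + b k) *\<^sub>R v k) + x *\<^sub>R a0 + c0"

text \<open>Representational cost R(f) (infimum over an empty set is +infinity).\<close>
definition repcost :: "nat \<Rightarrow> (real \<Rightarrow> real^'T) \<Rightarrow> ereal" where
  "repcost K f = (INF p \<in> {(w, b, v, a0, c0). (\<forall>k<K. \<bar>w k\<bar> = 1) \<and> f = netfun K w b v a0 c0}.
      (case p of (w, b, v, a0, c0) \<Rightarrow> ereal (\<Sum>k<K. norm (v k))))"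

definition locally_affine_at :: "(real \<Rightarrow> real) \<Rightarrow> real \<Rightarrow> bool" where
  "locally_affine_at g x \<longleftrightarrow> (\<exists>e>0. \<exists>m c. \<forall>y. \<bar>y - x\<bar> < e \<longrightarrow> g y = m * y + c)"

definition knot :: "(real \<Rightarrow> real) \<Rightarrow> real \<Rightarrow> bool" where
  "knot g x \<longleftrightarrow> \<not> locally_affine_at g x"

definition cpwl :: "(real \<Rightarrow> real) \<Rightarrow> bool" where
  "cpwl g \<longleftrightarrow> continuous_on UNIV g \<and> (\<exists>S. finite S \<and> (\<forall>x. x \<notin> S \<longrightarrow> locally_affine_at g x))"

definition aligned :: "real^'T \<Rightarrow> real^'T \<Rightarrow> bool" where
  "aligned u1 u2 \<longleftrightarrow> inner u1 u2 = norm u1 * norm u2"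

end

(*
  Since |w_k| = 1, each unit (w_k x + b_k)_+ equals (x - p_k)_+ up to an affine term,
  so every representation of f has the form  sum_k v_k (x - p_k)_+ + affine  with the same cost,
  and the jump of the slope of f at a point x is the sum of the v_k with p_k = x.  At the three
  knots these jumps are (b + delta) - a, -(1 + s) delta and c - (b - s delta), where s = tau/(1 - tau).
  Deleting all units at the three knots and putting b - a on one unit at xt1 and c - b on one unit
  at xt2 (such units exist because xt1 and xt2 are knots) yields a representation of the modified
  function.  By the triangle inequality this saves at least
    |b + delta - a| + (1 + s)|delta| + |c - b + s delta| - |b - a| - |c - b|  >=  0,
  and the saving is positive unless a - b and b - c are both nonnegative multiples of delta.
*)
theory Submission
  imports Defs
begin

section \<open>Networks with breakpoints\<close>

definition relu :: "real \<Rightarrow> real" where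
  "relu x = max 0 x"

definition canonical_net ::
  "nat \<Rightarrow> (nat \<Rightarrow> real) \<Rightarrow> (nat \<Rightarrow> real^'T) \<Rightarrow> real^'T \<Rightarrow> real^'T \<Rightarrow> real \<Rightarrow> real^'T" where
  "canonical_net K p v A C y = (\<Sum>k<K. relu (y - p k) *\<^sub>R v k) + y *\<^sub>R A + C"

lemma netfun_eq_canonical_net:
  assumes "\<forall>k<K. \<bar>w k\<bar> = 1"
  shows "netfun K w b v a0 c0 = canonical_net K (\<lambda>k. - b k * w k) v
     (a0 - (\<Sum>k<K. if w k = -1 then v k else 0))
     (c0 + (\<Sum>k<K. if w k = -1 then b k *\<^sub>R v k else 0))"
proof
  fix x
  define e where "e k = (if w k = -1 then v k else 0)" for k
  define d where "d k = (if w k = -1 then b k *\<^sub>R v k else 0)" for k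
  have unit: "max 0 (w k * x + b k) *\<^sub>R v k = relu (x - (- b k * w k)) *\<^sub>R v k - x *\<^sub>R e k + d k"
    if "k < K" for k
  proof -
    have "w k = 1 \<or> w k = -1" using assms that by auto
    then show ?thesis by (auto simp: relu_def max_def e_def d_def algebra_simps)
  qed
  have "netfun K w b v a0 c0 x
      = (\<Sum>k<K. relu (x - (- b k * w k)) *\<^sub>R v k - x *\<^sub>R e k + d k) + x *\<^sub>R a0 + c0"
    unfolding netfun_def using unit by simp
  also have "\<dots> = (\<Sum>k<K. relu (x - (- b k * w k)) *\<^sub>R v k) - x *\<^sub>R (\<Sum>k<K. e k) + (\<Sum>k<K. d k)
      + x *\<^sub>R a0 + c0"
    by (simp add: sum.distrib sum_subtractf scaleR_sum_right)
  finally show "netfun K w b v a0 c0 x = canonical_net K (\<lambda>k. - b k * w k) v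
     (a0 - (\<Sum>k<K. if w k = -1 then v k else 0))
     (c0 + (\<Sum>k<K. if w k = -1 then b k *\<^sub>R v k else 0)) x"
    unfolding canonical_net_def e_def d_def by (simp add: scaleR_right_diff_distrib)
qed

lemma canonical_net_eq_netfun: "canonical_net K p v A C = netfun K (\<lambda>_. 1) (\<lambda>k. - p k) v A C"
  by (auto simp: canonical_net_def netfun_def relu_def fun_eq_iff)

lemma repcost_eq_canonical:
  "repcost K f = (INF (p, v, A, C) \<in> {(p, v, A, C). f = canonical_net K p v A C}. ereal (\<Sum>k<K. norm (v k)))"
proof -
  let ?S = "{(w, b, v, a0, c0). (\<forall>k<K. \<bar>w k\<bar> = 1) \<and> f = netfun K w b v a0 c0}"
  let ?T = "{(p, v, A, C). f = canonical_net K p v A C}"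
  let ?cost_S = "\<lambda>(w, b, v, a0, c0). ereal (\<Sum>k<K. norm (v k))"
  let ?cost_T = "\<lambda>(p, v, A, C). ereal (\<Sum>k<K. norm (v k))"
  have "?cost_S ` ?S = ?cost_T ` ?T"
  proof (intro equalityI subsetI)
    fix r assume "r \<in> ?cost_S ` ?S"
    then obtain w b v a0 c0 where w: "\<forall>k<K. \<bar>w k\<bar> = 1" and f: "f = netfun K w b v a0 c0"
      and r: "r = ereal (\<Sum>k<K. norm (v k))" by auto
    show "r \<in> ?cost_T ` ?T"
      by (rule image_eqI[where x = "(\<lambda>k. - b k * w k, v, a0 - (\<Sum>k<K. if w k = -1 then v k else 0),
            c0 + (\<Sum>k<K. if w k = -1 then b k *\<^sub>R v k else 0))"])
        (simp_all add: r f netfun_eq_canonical_net[OF w])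
  next
    fix r assume "r \<in> ?cost_T ` ?T"
    then obtain p v A C where f: "f = canonical_net K p v A C" and r: "r = ereal (\<Sum>k<K. norm (v k))"
      by auto
    show "r \<in> ?cost_S ` ?S"
      by (rule image_eqI[where x = "(\<lambda>_. 1, \<lambda>k. - p k, v, A, C)"])
        (simp_all add: r f canonical_net_eq_netfun)
  qed
  then show ?thesis unfolding repcost_def by simp
qed

lemma repcost_nonneg: "0 \<le> repcost K f"
  unfolding repcost_def by (auto intro!: INF_greatest sum_nonneg)

section \<open>Affine pieces and one-sided slopes\<close>

lemma has_vector_derivative_imp_affine:
  fixes f :: "real \<Rightarrow> 'a::banach"
  assumes "continuous_on {l..u} f"
    and "\<And>y. y \<in> {l<..<u} \<Longrightarrow> (f has_vector_derivative m) (at y)"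
    and "y \<in> {l..u}"
  shows "f y = f l + (y - l) *\<^sub>R m"
proof -
  have "f y - (y - l) *\<^sub>R m = f l - (l - l) *\<^sub>R m"
  proof (rule has_derivative_zero_unique_strong_interval[where k = "{l, u}" and f = "\<lambda>y. f y - (y - l) *\<^sub>R m"])
    show "continuous_on {l..u} (\<lambda>y. f y - (y - l) *\<^sub>R m)"
      using assms(1) by (intro continuous_intros) auto
    fix z assume "z \<in> {l..u} - {l, u}"
    then have "(f has_vector_derivative m) (at z within {l..u})"
      using assms(2) has_vector_derivative_at_within by force
    then have "((\<lambda>y. f y - (y - l) *\<^sub>R m) has_vector_derivative (m - 1 *\<^sub>R m)) (at z within {l..u})"
      by (auto intro!: derivative_eq_intros)
    then show "((\<lambda>y. f y - (y - l) *\<^sub>R m) has_derivative (\<lambda>h. 0)) (at z within {l..u})"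
      by (simp add: has_vector_derivative_def)
  qed (use assms in auto)
  then show ?thesis by (simp add: algebra_simps)
qed

lemma has_vector_derivative_at_interval_ends:
  fixes f :: "real \<Rightarrow> 'a::banach"
  assumes "l < u" "continuous_on {l..u} f"
    and "\<And>y. y \<in> {l<..<u} \<Longrightarrow> (f has_vector_derivative m) (at y)"
  shows "(f has_vector_derivative m) (at_right l)" "(f has_vector_derivative m) (at_left u)"
proof -
  have within: "(f has_vector_derivative m) (at y within {l..u})" if "y \<in> {l..u}" for y
  proof (rule has_vector_derivative_transform_within[where d = 1])
    show "((\<lambda>y. f l + (y - l) *\<^sub>R m) has_vector_derivative m) (at y within {l..u})"
      by (auto intro!: derivative_eq_intros)
  next
    fix z assume "z \<in> {l..u}"
    then show "f l + (z - l) *\<^sub>R m = f z"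
      using has_vector_derivative_imp_affine[OF assms(2,3), of z] by simp
  qed (use that in auto)
  then show "(f has_vector_derivative m) (at_right l)" "(f has_vector_derivative m) (at_left u)"
    using within[of l] within[of u] assms(1)
    by (simp_all add: at_within_Icc_at_right at_within_Icc_at_left)
qed

lemma locally_affine_atI:
  assumes "eventually (\<lambda>y. g y = m * y + c) (nhds x)"
  shows "locally_affine_at g x"
proof -
  obtain e where "e > 0" and e: "\<And>y. dist y x < e \<Longrightarrow> g y = m * y + c"
    using assms unfolding eventually_nhds_metric by blast
  then show ?thesis
    unfolding locally_affine_at_def
    by (intro exI[of _ e] exI[of _ m] exI[of _ c] conjI allI impI) (auto simp: e dist_real_def)
qed

lemma affine_on_interval_imp_not_knot:
  fixes f :: "real \<Rightarrow> real^'T"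
  assumes "l < x" "x < u" "\<And>y. y \<in> {l..u} \<Longrightarrow> f y = f l + (y - l) *\<^sub>R m"
  shows "\<not> knot (\<lambda>y. f y $ t) x"
proof -
  have "eventually (\<lambda>y. y \<in> {l<..<u}) (nhds x)"
    using assms by (intro eventually_nhds_in_open) auto
  then have "eventually (\<lambda>y. f y $ t = m $ t * y + (f l $ t - m $ t * l)) (nhds x)"
  proof (rule eventually_mono)
    fix y assume "y \<in> {l<..<u}"
    then have "f y $ t = (f l + (y - l) *\<^sub>R m) $ t" using assms(3)[of y] by simp
    then show "f y $ t = m $ t * y + (f l $ t - m $ t * l)" by (simp add: algebra_simps)
  qed
  then show ?thesis
    by (simp add: knot_def locally_affine_atI)
qed

lemma relu_has_real_derivative_at_right:
  "((\<lambda>y. relu (y - q)) has_real_derivative (if q \<le> x then 1 else 0)) (at_right x)"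
proof -
  let ?d = "if q \<le> x then 1 else q - x"
  have "((\<lambda>y. relu (y - q)) has_real_derivative (if q \<le> x then 1 else 0)) (at x within {x..x + 1})"
  proof (rule has_field_derivative_transform_within[where d = ?d])
    show "((\<lambda>y. if q \<le> x then y - q else 0) has_real_derivative (if q \<le> x then 1 else 0))
        (at x within {x..x + 1})"
      by (auto intro!: derivative_eq_intros)
  qed (auto simp: relu_def dist_real_def)
  then show ?thesis by (simp add: at_within_Icc_at_right)
qed

lemma relu_has_real_derivative_at_left:
  "((\<lambda>y. relu (y - q)) has_real_derivative (if q < x then 1 else 0)) (at_left x)"
proof -
  let ?d = "if q < x then x - q else 1"
  have "((\<lambda>y. relu (y - q)) has_real_derivative (if q < x then 1 else 0)) (at x within {x - 1..x})"
  proof (rule has_field_derivative_transform_within[where d = ?d])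
    show "((\<lambda>y. if q < x then y - q else 0) has_real_derivative (if q < x then 1 else 0))
        (at x within {x - 1..x})"
      by (auto intro!: derivative_eq_intros)
  qed (auto simp: relu_def dist_real_def)
  then show ?thesis by (simp add: at_within_Icc_at_left)
qed

lemma relu_scaleR_has_derivative_at_right:
  "((\<lambda>y. relu (y - q) *\<^sub>R u) has_vector_derivative (if q \<le> x then u else 0)) (at_right x)"
proof -
  have "((\<lambda>y. relu (y - q) *\<^sub>R u) has_vector_derivative
      (relu (x - q) *\<^sub>R 0 + (if q \<le> x then 1 else 0) *\<^sub>R u)) (at_right x)"
    by (rule has_vector_derivative_scaleR[OF relu_has_real_derivative_at_right has_vector_derivative_const])
  then show ?thesis by (cases "q \<le> x") simp_all
qed

lemma relu_scaleR_has_derivative_at_left: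
  "((\<lambda>y. relu (y - q) *\<^sub>R u) has_vector_derivative (if q < x then u else 0)) (at_left x)"
proof -
  have "((\<lambda>y. relu (y - q) *\<^sub>R u) has_vector_derivative
      (relu (x - q) *\<^sub>R 0 + (if q < x then 1 else 0) *\<^sub>R u)) (at_left x)"
    by (rule has_vector_derivative_scaleR[OF relu_has_real_derivative_at_left has_vector_derivative_const])
  then show ?thesis by (cases "q < x") simp_all
qed

lemma has_vector_derivative_scaleR_ident: "((\<lambda>y. y *\<^sub>R A) has_vector_derivative A) F"
  by (simp add: has_vector_derivative_def bounded_linear_scaleR_left bounded_linear_imp_has_derivative)

section \<open>Slope jumps of networks\<close>

lemma canonical_net_has_derivative_at_right:
  "(canonical_net K p v A C has_vector_derivative A + (\<Sum>k<K. if p k \<le> x then v k else 0)) (at_right x)"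
proof -
  have "((\<lambda>y. (\<Sum>k<K. relu (y - p k) *\<^sub>R v k) + y *\<^sub>R A + C) has_vector_derivative
      (\<Sum>k<K. if p k \<le> x then v k else 0) + A + 0) (at_right x)"
    by (intro has_vector_derivative_add has_vector_derivative_sum relu_scaleR_has_derivative_at_right
        has_vector_derivative_scaleR_ident has_vector_derivative_const)
  then show ?thesis
    by (simp add: canonical_net_def [abs_def] add.commute)
qed

lemma canonical_net_has_derivative_at_left:
  "(canonical_net K p v A C has_vector_derivative A + (\<Sum>k<K. if p k < x then v k else 0)) (at_left x)"
proof -
  have "((\<lambda>y. (\<Sum>k<K. relu (y - p k) *\<^sub>R v k) + y *\<^sub>R A + C) has_vector_derivative
      (\<Sum>k<K. if p k < x then v k else 0) + A + 0) (at_left x)"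
    by (intro has_vector_derivative_add has_vector_derivative_sum relu_scaleR_has_derivative_at_left
        has_vector_derivative_scaleR_ident has_vector_derivative_const)
  then show ?thesis
    by (simp add: canonical_net_def [abs_def] add.commute)
qed

definition slope_jump :: "nat \<Rightarrow> (nat \<Rightarrow> real) \<Rightarrow> (nat \<Rightarrow> real^'T) \<Rightarrow> real \<Rightarrow> real^'T" where
  "slope_jump K p v x = (\<Sum>k<K. if p k = x then v k else 0)"

lemma slope_jump_eq_derivative_diff:
  assumes "(canonical_net K p v A C has_vector_derivative l) (at_left x)"
    and "(canonical_net K p v A C has_vector_derivative r) (at_right x)"
  shows "slope_jump K p v x = r - l"
proof -
  have "l = A + (\<Sum>k<K. if p k < x then v k else 0)"
    by (rule vector_derivative_unique_within[OF _ assms(1) canonical_net_has_derivative_at_left]) simp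
  moreover have "r = A + (\<Sum>k<K. if p k \<le> x then v k else 0)"
    by (rule vector_derivative_unique_within[OF _ assms(2) canonical_net_has_derivative_at_right]) simp
  moreover have "(if p k = x then v k else 0) = (if p k \<le> x then v k else 0) - (if p k < x then v k else 0)"
    for k by auto
  ultimately show ?thesis
    unfolding slope_jump_def by (simp add: sum_subtractf)
qed

lemma canonical_net_locally_affine_at:
  assumes "\<forall>k<K. p k \<noteq> x"
  shows "locally_affine_at (\<lambda>y. canonical_net K p v A C y $ t) x"
proof (rule locally_affine_atI)
  have "eventually (\<lambda>y. relu (y - p k) = (if p k < x then y - p k else 0)) (nhds x)" if "k < K" for k
  proof (cases "p k < x")
    case True
    have "eventually (\<lambda>y. y \<in> {p k<..}) (nhds x)"
      using True by (intro eventually_nhds_in_open) auto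
    then show ?thesis by (rule eventually_mono) (use True in \<open>auto simp: relu_def\<close>)
  next
    case False
    then have "x < p k" using assms that by force
    then have "eventually (\<lambda>y. y \<in> {..<p k}) (nhds x)"
      by (intro eventually_nhds_in_open) auto
    then show ?thesis by (rule eventually_mono) (use False in \<open>auto simp: relu_def\<close>)
  qed
  then have "eventually (\<lambda>y. \<forall>k\<in>{..<K}. relu (y - p k) = (if p k < x then y - p k else 0)) (nhds x)"
    by (intro eventually_ball_finite) auto
  then show "eventually (\<lambda>y. canonical_net K p v A C y $ t =
      ((\<Sum>k<K. if p k < x then v k $ t else 0) + A $ t) * y
      + ((\<Sum>k<K. if p k < x then - p k * v k $ t else 0) + C $ t)) (nhds x)"
  proof (rule eventually_mono)
    fix y assume relu_eq: "\<forall>k\<in>{..<K}. relu (y - p k) = (if p k < x then y - p k else 0)"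
    have "canonical_net K p v A C y $ t = (\<Sum>k<K. relu (y - p k) * v k $ t) + y * A $ t + C $ t"
      by (simp add: canonical_net_def sum_component)
    also have "(\<Sum>k<K. relu (y - p k) * v k $ t)
        = (\<Sum>k<K. y * (if p k < x then v k $ t else 0) + (if p k < x then - p k * v k $ t else 0))"
      by (rule sum.cong) (use relu_eq in \<open>auto simp: algebra_simps\<close>)
    finally show "canonical_net K p v A C y $ t =
      ((\<Sum>k<K. if p k < x then v k $ t else 0) + A $ t) * y
      + ((\<Sum>k<K. if p k < x then - p k * v k $ t else 0) + C $ t)"
      by (simp add: sum.distrib sum_distrib_left algebra_simps)
  qed
qed

lemma knot_canonical_net_imp_breakpoint:
  assumes "knot (\<lambda>y. canonical_net K p v A C y $ t) x"
  obtains k where "k < K" "p k = x"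
  using assms canonical_net_locally_affine_at unfolding knot_def by blast

lemma sum_restrict_breakpoints:
  fixes h :: "nat \<Rightarrow> real \<Rightarrow> 'a::comm_monoid_add"
  assumes "finite X"
  shows "(\<Sum>x\<in>X. \<Sum>k<K. if p k = x then h k x else 0) = (\<Sum>k<K. if p k \<in> X then h k (p k) else 0)"
  by (subst sum.swap) (simp add: assms)

lemma canonical_net_remove_breakpoints:
  assumes "finite X"
  shows "canonical_net K p (\<lambda>k. if p k \<in> X then 0 else v k) A C y
    = canonical_net K p v A C y - (\<Sum>x\<in>X. relu (y - x) *\<^sub>R slope_jump K p v x)"
proof -
  have "(\<Sum>x\<in>X. relu (y - x) *\<^sub>R slope_jump K p v x)
      = (\<Sum>x\<in>X. \<Sum>k<K. if p k = x then relu (y - p k) *\<^sub>R v k else 0)"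
    unfolding slope_jump_def scaleR_sum_right by (intro sum.cong) auto
  also have "\<dots> = (\<Sum>k<K. if p k \<in> X then relu (y - p k) *\<^sub>R v k else 0)"
    using sum_restrict_breakpoints[OF assms, of p "\<lambda>k x. relu (y - p k) *\<^sub>R v k"] by simp
  also have "\<dots> = (\<Sum>k<K. relu (y - p k) *\<^sub>R v k) - (\<Sum>k<K. relu (y - p k) *\<^sub>R (if p k \<in> X then 0 else v k))"
    unfolding sum_subtractf[symmetric] by (intro sum.cong) auto
  finally show ?thesis
    unfolding canonical_net_def by (simp add: algebra_simps)
qed

lemma norm_remove_breakpoints_le:
  assumes "finite X"
  shows "(\<Sum>k<K. norm (if p k \<in> X then 0 else v k)) + (\<Sum>x\<in>X. norm (slope_jump K p v x))
    \<le> (\<Sum>k<K. norm (v k))"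
proof -
  have "(\<Sum>x\<in>X. norm (slope_jump K p v x)) \<le> (\<Sum>x\<in>X. \<Sum>k<K. if p k = x then norm (v k) else 0)"
    unfolding slope_jump_def by (intro sum_mono sum_norm_le) auto
  also have "\<dots> = (\<Sum>k<K. if p k \<in> X then norm (v k) else 0)"
    by (rule sum_restrict_breakpoints[OF assms])
  also have "\<dots> = (\<Sum>k<K. norm (v k)) - (\<Sum>k<K. norm (if p k \<in> X then 0 else v k))"
    unfolding sum_subtractf[symmetric] by (intro sum.cong) auto
  finally show ?thesis by simp
qed

lemma canonical_net_fun_upd:
  assumes "k < K"
  shows "canonical_net K p (v(k := u)) A C y = canonical_net K p v A C y + relu (y - p k) *\<^sub>R (u - v k)"
proof -
  have "(\<Sum>j<K. relu (y - p j) *\<^sub>R (v(k := u)) j)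
      = (\<Sum>j<K. relu (y - p j) *\<^sub>R v j + (if j = k then relu (y - p k) *\<^sub>R (u - v k) else 0))"
    by (intro sum.cong) (auto simp: algebra_simps)
  then show ?thesis
    using assms unfolding canonical_net_def by (simp add: sum.distrib algebra_simps)
qed

lemma sum_norm_fun_upd:
  fixes v :: "nat \<Rightarrow> 'a::real_normed_vector"
  assumes "k < K"
  shows "(\<Sum>j<K. norm ((v(k := u)) j)) = (\<Sum>j<K. norm (v j)) - norm (v k) + norm u"
proof -
  have "(\<Sum>j<K. norm ((v(k := u)) j)) = (\<Sum>j<K. norm (v j) + (if j = k then norm u - norm (v k) else 0))"
    by (intro sum.cong) auto
  also have "\<dots> = (\<Sum>j<K. norm (v j)) + (norm u - norm (v k))"
    using assms by (simp add: sum.distrib)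
  finally show ?thesis by simp
qed

lemma canonical_net_reassign_jumps:
  assumes "k1 < K" "p k1 = x1" "k2 < K" "p k2 = x2" "x1 \<noteq> x" "x \<noteq> x2" "x1 \<noteq> x2"
  obtains v' where
    "\<And>y. canonical_net K p v' A C y = canonical_net K p v A C y
        - relu (y - x1) *\<^sub>R (slope_jump K p v x1 - u) - relu (y - x) *\<^sub>R slope_jump K p v x
        - relu (y - x2) *\<^sub>R (slope_jump K p v x2 - u')"
    "(\<Sum>k<K. norm (v' k)) + norm (slope_jump K p v x1) + norm (slope_jump K p v x)
        + norm (slope_jump K p v x2) \<le> (\<Sum>k<K. norm (v k)) + norm u + norm u'"
proof
  let ?X = "{x1, x, x2}"
  define v0 where "v0 k = (if p k \<in> ?X then 0 else v k)" for k
  have v0_k: "v0 k1 = 0" "(v0(k1 := u)) k2 = 0"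
    using assms by (auto simp: v0_def)
  have "(\<Sum>x'\<in>?X. relu (y - x') *\<^sub>R slope_jump K p v x') = relu (y - x1) *\<^sub>R slope_jump K p v x1
      + relu (y - x) *\<^sub>R slope_jump K p v x + relu (y - x2) *\<^sub>R slope_jump K p v x2" for y
    using assms by (simp add: algebra_simps)
  then have "canonical_net K p v0 A C y = canonical_net K p v A C y - (relu (y - x1) *\<^sub>R slope_jump K p v x1
      + relu (y - x) *\<^sub>R slope_jump K p v x + relu (y - x2) *\<^sub>R slope_jump K p v x2)" for y
    using canonical_net_remove_breakpoints[of ?X K p v A C y] unfolding v0_def by simp
  then show "canonical_net K p (v0(k1 := u, k2 := u')) A C y = canonical_net K p v A C y
        - relu (y - x1) *\<^sub>R (slope_jump K p v x1 - u) - relu (y - x) *\<^sub>R slope_jump K p v x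
        - relu (y - x2) *\<^sub>R (slope_jump K p v x2 - u')" for y
    using assms v0_k by (simp add: canonical_net_fun_upd algebra_simps)
  have "(\<Sum>k<K. norm (v0 k)) + (norm (slope_jump K p v x1) + norm (slope_jump K p v x)
      + norm (slope_jump K p v x2)) \<le> (\<Sum>k<K. norm (v k))"
    using norm_remove_breakpoints_le[of ?X] assms unfolding v0_def by (simp add: add.assoc)
  moreover have "(\<Sum>k<K. norm ((v0(k1 := u, k2 := u')) k)) = (\<Sum>k<K. norm (v0 k)) + norm u + norm u'"
    using sum_norm_fun_upd[OF assms(3), of "v0(k1 := u)" u'] sum_norm_fun_upd[OF assms(1), of v0 u] v0_k
    by simp
  ultimately show "(\<Sum>k<K. norm ((v0(k1 := u, k2 := u')) k)) + norm (slope_jump K p v x1)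
      + norm (slope_jump K p v x) + norm (slope_jump K p v x2) \<le> (\<Sum>k<K. norm (v k)) + norm u + norm u'"
    by simp
qed

section \<open>Removing a knot\<close>

lemma chord_replacement_eq:
  fixes f :: "real \<Rightarrow> 'a::real_vector"
  assumes ord: "x1 < x" "x < x2" and s: "s * (x2 - x) = x - x1"
    and left: "\<And>y. y \<in> {x1..x} \<Longrightarrow> f y = f x1 + (y - x1) *\<^sub>R (b + \<delta>)"
    and right: "\<And>y. y \<in> {x..x2} \<Longrightarrow> f y = f x + (y - x) *\<^sub>R (b - s *\<^sub>R \<delta>)"
  shows "(if y \<in> {x1..x2} then f x1 + ((y - x1) / (x2 - x1)) *\<^sub>R (f x2 - f x1) else f y)
    = f y - (relu (y - x1) - (1 + s) * relu (y - x) + s * relu (y - x2)) *\<^sub>R \<delta>"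
proof -
  have fx: "f x = f x1 + (x - x1) *\<^sub>R (b + \<delta>)"
    using left[of x] ord by simp
  have "f x2 - f x1 = (x2 - x1) *\<^sub>R b + ((x - x1) - s * (x2 - x)) *\<^sub>R \<delta>"
    using right[of x2] ord by (simp add: fx algebra_simps)
  then have chord: "((y - x1) / (x2 - x1)) *\<^sub>R (f x2 - f x1) = (y - x1) *\<^sub>R b"
    using ord s by simp
  consider "y < x1" | "x1 \<le> y" "y \<le> x" | "x < y" "y \<le> x2" | "x2 < y" by linarith
  then show ?thesis
  proof cases
    case 1
    then show ?thesis using ord by (simp add: relu_def)
  next
    case 2
    then have "y \<in> {x1..x2}" using ord by auto
    moreover have "f y = f x1 + (y - x1) *\<^sub>R (b + \<delta>)"
      using 2 by (intro left) auto
    moreover have "relu (y - x1) = y - x1" "relu (y - x) = 0" "relu (y - x2) = 0"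
      using 2 ord by (auto simp: relu_def)
    ultimately show ?thesis
      by (simp only: if_True chord) (simp add: algebra_simps)
  next
    case 3
    then have "y \<in> {x1..x2}" using ord by auto
    moreover have "f y = f x1 + (x - x1) *\<^sub>R (b + \<delta>) + (y - x) *\<^sub>R (b - s *\<^sub>R \<delta>)"
      using 3 right[of y] by (simp add: fx)
    moreover have "relu (y - x1) = y - x1" "relu (y - x) = y - x" "relu (y - x2) = 0"
      using 3 ord by (auto simp: relu_def)
    ultimately show ?thesis
      by (simp only: if_True chord) (simp add: algebra_simps)
  next
    case 4
    then have "relu (y - x1) - (1 + s) * relu (y - x) + s * relu (y - x2) = 0"
      using ord s by (simp add: relu_def algebra_simps)
    with 4 show ?thesis by simp
  qed
qed

lemma norm_add_eq_imp_nonneg_multiple: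
  fixes u d :: "'a::real_inner"
  assumes "d \<noteq> 0" "norm (u + d) = norm u + norm d"
  shows "\<exists>\<alpha>\<ge>0. u = \<alpha> *\<^sub>R d"
proof -
  have eq: "norm d *\<^sub>R u = norm u *\<^sub>R d"
    using norm_triangle_eq[THEN iffD1, OF assms(2)] by simp
  have "u = inverse (norm d) *\<^sub>R (norm d *\<^sub>R u)"
    using assms(1) by simp
  also have "\<dots> = (norm u / norm d) *\<^sub>R d"
    unfolding eq by (simp add: divide_inverse mult.commute)
  finally show ?thesis
    using divide_nonneg_nonneg[OF norm_ge_zero norm_ge_zero] by blast
qed

lemma aligned_nonneg_multiples:
  fixes d :: "real^'T"
  assumes "0 \<le> \<alpha>" "0 \<le> \<beta>"
  shows "aligned (\<alpha> *\<^sub>R d) (\<beta> *\<^sub>R d)"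
proof -
  have "inner d d = norm d * norm d"
    by (metis power2_eq_square power2_norm_eq_inner)
  then show ?thesis
    unfolding aligned_def using assms by (simp add: abs_of_nonneg mult_ac)
qed

lemma norm_slope_changes_le:
  fixes a b c \<delta> :: "'a::real_normed_vector"
  assumes "0 \<le> s"
  shows "norm (b - a) + norm (c - b)
    \<le> norm (b + \<delta> - a) + norm ((b - s *\<^sub>R \<delta>) - (b + \<delta>)) + norm (c - (b - s *\<^sub>R \<delta>))"
proof -
  have "norm (b - a) \<le> norm (b + \<delta> - a) + norm \<delta>"
    using norm_triangle_ineq4[of "b + \<delta> - a" \<delta>] by simp
  moreover have "norm (c - b) \<le> norm (c - (b - s *\<^sub>R \<delta>)) + s * norm \<delta>"
    using norm_triangle_ineq4[of "c - (b - s *\<^sub>R \<delta>)" "s *\<^sub>R \<delta>"] assms by simp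
  moreover have "norm ((b - s *\<^sub>R \<delta>) - (b + \<delta>)) = (1 + s) * norm \<delta>"
  proof -
    have "(b - s *\<^sub>R \<delta>) - (b + \<delta>) = - ((1 + s) *\<^sub>R \<delta>)"
      by (simp add: algebra_simps)
    then show ?thesis using assms by (simp only: norm_minus_cancel norm_scaleR)
  qed
  ultimately show ?thesis by (simp add: algebra_simps)
qed

lemma norm_slope_changes_less:
  fixes a b c \<delta> :: "real^'T"
  assumes "0 < s" "\<delta> \<noteq> 0" "\<not> aligned (a - b) (b - c)"
  shows "norm (b - a) + norm (c - b)
    < norm (b + \<delta> - a) + norm ((b - s *\<^sub>R \<delta>) - (b + \<delta>)) + norm (c - (b - s *\<^sub>R \<delta>))"
proof (rule ccontr)
  let ?u1 = "a - b - \<delta>" and ?u2 = "b - c - s *\<^sub>R \<delta>"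
  have norms: "norm (b - a) = norm (?u1 + \<delta>)" "norm (c - b) = norm (?u2 + s *\<^sub>R \<delta>)"
      "norm (b + \<delta> - a) = norm ?u1" "norm (c - (b - s *\<^sub>R \<delta>)) = norm ?u2"
      "norm ((b - s *\<^sub>R \<delta>) - (b + \<delta>)) = norm \<delta> + norm (s *\<^sub>R \<delta>)"
  proof -
    have "b - a = - (?u1 + \<delta>)" "c - b = - (?u2 + s *\<^sub>R \<delta>)" "b + \<delta> - a = - ?u1"
      "c - (b - s *\<^sub>R \<delta>) = - ?u2" "(b - s *\<^sub>R \<delta>) - (b + \<delta>) = - ((1 + s) *\<^sub>R \<delta>)"
      by (simp_all add: algebra_simps)
    then show "norm (b - a) = norm (?u1 + \<delta>)" "norm (c - b) = norm (?u2 + s *\<^sub>R \<delta>)"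
      "norm (b + \<delta> - a) = norm ?u1" "norm (c - (b - s *\<^sub>R \<delta>)) = norm ?u2"
      "norm ((b - s *\<^sub>R \<delta>) - (b + \<delta>)) = norm \<delta> + norm (s *\<^sub>R \<delta>)"
      using assms(1) by (simp_all only: norm_minus_cancel norm_scaleR) (simp add: algebra_simps)
  qed
  assume "\<not> ?thesis"
  then have "norm (?u1 + \<delta>) + norm (?u2 + s *\<^sub>R \<delta>) \<ge> norm ?u1 + norm \<delta> + (norm ?u2 + norm (s *\<^sub>R \<delta>))"
    unfolding norms by linarith
  then have "norm (?u1 + \<delta>) = norm ?u1 + norm \<delta>" "norm (?u2 + s *\<^sub>R \<delta>) = norm ?u2 + norm (s *\<^sub>R \<delta>)"
    using norm_triangle_ineq[of ?u1 \<delta>] norm_triangle_ineq[of ?u2 "s *\<^sub>R \<delta>"] by linarith+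
  moreover have "s *\<^sub>R \<delta> \<noteq> 0" using assms(1,2) by simp
  ultimately obtain \<alpha> \<beta> where "0 \<le> \<alpha>" "?u1 = \<alpha> *\<^sub>R \<delta>" "0 \<le> \<beta>" "?u2 = \<beta> *\<^sub>R (s *\<^sub>R \<delta>)"
    using norm_add_eq_imp_nonneg_multiple assms(2) by metis
  then have "a - b = (\<alpha> + 1) *\<^sub>R \<delta>" "b - c = ((\<beta> + 1) * s) *\<^sub>R \<delta>"
    by (simp_all add: algebra_simps)
  moreover have "aligned ((\<alpha> + 1) *\<^sub>R \<delta>) (((\<beta> + 1) * s) *\<^sub>R \<delta>)"
    using \<open>0 \<le> \<alpha>\<close> \<open>0 \<le> \<beta>\<close> assms(1) by (intro aligned_nonneg_multiples) auto
  ultimately show False using assms(3) by simp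
qed

lemma INF_add_le_INF:
  fixes F G :: "_ \<Rightarrow> ereal"
  assumes "\<And>x. x \<in> X \<Longrightarrow> \<exists>y\<in>Y. G y + ereal d \<le> F x"
  shows "(INF y\<in>Y. G y) + ereal d \<le> (INF x\<in>X. F x)"
proof (rule INF_greatest)
  fix x assume "x \<in> X"
  then obtain y where "y \<in> Y" "G y + ereal d \<le> F x" using assms by blast
  then show "(INF y\<in>Y. G y) + ereal d \<le> F x"
    by (meson INF_lower add_right_mono order_trans)
qed

locale knot_removal =
  fixes f :: "real \<Rightarrow> real^'T" and x1 x x2 s :: real and a b c \<delta> :: "real^'T"
  assumes continuous: "continuous_on UNIV f"
    and between: "x1 < x" "x < x2"
    and s_eq: "s * (x2 - x) = x - x1"
    and knot_x1: "\<exists>t. knot (\<lambda>y. f y $ t) x1"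
    and knot_x: "\<exists>t. knot (\<lambda>y. f y $ t) x"
    and knot_x2: "\<exists>t. knot (\<lambda>y. f y $ t) x2"
    and slope_a: "(f has_vector_derivative a) (at_left x1)"
    and slope_left: "\<And>y. y \<in> {x1<..<x} \<Longrightarrow> (f has_vector_derivative (b + \<delta>)) (at y)"
    and slope_right: "\<And>y. y \<in> {x<..<x2} \<Longrightarrow> (f has_vector_derivative (b - s *\<^sub>R \<delta>)) (at y)"
    and slope_c: "(f has_vector_derivative c) (at_right x2)"
begin

definition chord :: "real \<Rightarrow> real^'T" where
  "chord y = (if y \<in> {x1..x2} then f x1 + ((y - x1) / (x2 - x1)) *\<^sub>R (f x2 - f x1) else f y)"

definition cost_gap :: real where
  "cost_gap = norm (b + \<delta> - a) + norm ((b - s *\<^sub>R \<delta>) - (b + \<delta>)) + norm (c - (b - s *\<^sub>R \<delta>))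
    - norm (b - a) - norm (c - b)"

lemma s_pos: "0 < s"
proof -
  have "0 < s * (x2 - x)" using s_eq between by simp
  then show ?thesis using between by (simp add: zero_less_mult_iff)
qed

lemma continuous_left: "continuous_on {x1..x} f" and continuous_right: "continuous_on {x..x2} f"
  using continuous by (auto intro: continuous_on_subset)

lemma affine_left: "y \<in> {x1..x} \<Longrightarrow> f y = f x1 + (y - x1) *\<^sub>R (b + \<delta>)"
  by (rule has_vector_derivative_imp_affine[OF continuous_left slope_left])

lemma affine_right: "y \<in> {x..x2} \<Longrightarrow> f y = f x + (y - x) *\<^sub>R (b - s *\<^sub>R \<delta>)"
  by (rule has_vector_derivative_imp_affine[OF continuous_right slope_right])

lemma delta_nonzero: "\<delta> \<noteq> 0"
proof
  assume "\<delta> = 0"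
  have "f y = f x1 + (y - x1) *\<^sub>R b" if "y \<in> {x1..x2}" for y
  proof (cases "y \<le> x")
    case True
    then show ?thesis using that affine_left[of y] \<open>\<delta> = 0\<close> by simp
  next
    case False
    then show ?thesis
      using that affine_right[of y] affine_left[of x] between \<open>\<delta> = 0\<close> by (simp add: algebra_simps)
  qed
  moreover obtain t where "knot (\<lambda>y. f y $ t) x" using knot_x by blast
  ultimately show False
    using affine_on_interval_imp_not_knot[OF between] by blast
qed

lemma chord_eq: "chord y = f y - (relu (y - x1) - (1 + s) * relu (y - x) + s * relu (y - x2)) *\<^sub>R \<delta>"
  unfolding chord_def using between s_eq affine_left affine_right by (rule chord_replacement_eq)

lemma canonical_rep_of_chord:
  assumes f: "f = canonical_net K p v A C"
  shows "\<exists>v'. chord = canonical_net K p v' A C \<and> (\<Sum>k<K. norm (v' k)) + cost_gap \<le> (\<Sum>k<K. norm (v k))"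
proof -
  note ends_left = has_vector_derivative_at_interval_ends[OF between(1) continuous_left slope_left]
  note ends_right = has_vector_derivative_at_interval_ends[OF between(2) continuous_right slope_right]
  have jump_x1: "slope_jump K p v x1 = (b + \<delta>) - a"
    using slope_a ends_left(1) unfolding f by (rule slope_jump_eq_derivative_diff)
  have jump_x: "slope_jump K p v x = (b - s *\<^sub>R \<delta>) - (b + \<delta>)"
    using ends_left(2) ends_right(1) unfolding f by (rule slope_jump_eq_derivative_diff)
  have jump_x2: "slope_jump K p v x2 = c - (b - s *\<^sub>R \<delta>)"
    using ends_right(2) slope_c unfolding f by (rule slope_jump_eq_derivative_diff)
  obtain t1 t2 where "knot (\<lambda>y. canonical_net K p v A C y $ t1) x1"
      "knot (\<lambda>y. canonical_net K p v A C y $ t2) x2"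
    using knot_x1 knot_x2 unfolding f by blast
  then obtain k1 k2 where k: "k1 < K" "p k1 = x1" "k2 < K" "p k2 = x2"
    by (metis knot_canonical_net_imp_breakpoint)
  have distinct: "x1 \<noteq> x" "x \<noteq> x2" "x1 \<noteq> x2" using between by auto
  obtain v' where
    net: "\<And>y. canonical_net K p v' A C y = canonical_net K p v A C y
        - relu (y - x1) *\<^sub>R (slope_jump K p v x1 - (b - a)) - relu (y - x) *\<^sub>R slope_jump K p v x
        - relu (y - x2) *\<^sub>R (slope_jump K p v x2 - (c - b))" and
    cost: "(\<Sum>k<K. norm (v' k)) + norm (slope_jump K p v x1) + norm (slope_jump K p v x)
        + norm (slope_jump K p v x2) \<le> (\<Sum>k<K. norm (v k)) + norm (b - a) + norm (c - b)"
    using canonical_net_reassign_jumps[OF k distinct, where A = A and C = C and v = v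
        and u = "b - a" and u' = "c - b"] by blast
  have "chord = canonical_net K p v' A C"
  proof
    fix y
    show "chord y = canonical_net K p v' A C y"
      unfolding chord_eq net jump_x1 jump_x jump_x2 f[symmetric] by (simp add: algebra_simps)
  qed
  moreover have "(\<Sum>k<K. norm (v' k)) + cost_gap \<le> (\<Sum>k<K. norm (v k))"
    using cost unfolding jump_x1 jump_x jump_x2 cost_gap_def by linarith
  ultimately show ?thesis by blast
qed

lemma repcost_chord_add_gap_le: "repcost K chord + ereal cost_gap \<le> repcost K f"
  unfolding repcost_eq_canonical
proof (rule INF_add_le_INF)
  fix rep assume "rep \<in> {(p, v, A, C). f = canonical_net K p v A C}"
  then obtain p v A C where rep: "rep = (p, v, A, C)" and f: "f = canonical_net K p v A C" by blast
  obtain v' where "chord = canonical_net K p v' A C" "(\<Sum>k<K. norm (v' k)) + cost_gap \<le> (\<Sum>k<K. norm (v k))"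
    using canonical_rep_of_chord[OF f] by blast
  then show "\<exists>rep'\<in>{(p, v, A, C). chord = canonical_net K p v A C}.
      (case rep' of (p, v, A, C) \<Rightarrow> ereal (\<Sum>k<K. norm (v k))) + ereal cost_gap
      \<le> (case rep of (p, v, A, C) \<Rightarrow> ereal (\<Sum>k<K. norm (v k)))"
    unfolding rep by (intro bexI[of _ "(p, v', A, C)"]) auto
qed

lemma repcost_chord_le: "repcost K chord \<le> repcost K f"
proof -
  have "0 \<le> cost_gap"
    using norm_slope_changes_le[OF less_imp_le[OF s_pos], where a = a and b = b and c = c and \<delta> = \<delta>]
    unfolding cost_gap_def by simp
  then have "repcost K chord \<le> repcost K chord + ereal cost_gap"
    by (intro ereal_le_add_self) simp
  also have "\<dots> \<le> repcost K f"
    by (rule repcost_chord_add_gap_le)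
  finally show ?thesis .
qed

lemma repcost_chord_less:
  assumes "\<not> aligned (a - b) (b - c)" "repcost K f < \<infinity>"
  shows "repcost K chord < repcost K f"
proof -
  have "0 < cost_gap"
    using norm_slope_changes_less[OF s_pos delta_nonzero assms(1)] unfolding cost_gap_def by simp
  moreover have "\<bar>repcost K chord\<bar> \<noteq> \<infinity>"
    using repcost_nonneg[of K chord] repcost_chord_le[of K] assms(2) by auto
  ultimately have "repcost K chord < repcost K chord + ereal cost_gap"
    using ereal_less_add[of "repcost K chord" 0 "ereal cost_gap"] by simp
  then show ?thesis
    using repcost_chord_add_gap_le by (rule order_less_le_trans)
qed

end

theorem lemma1:
  fixes f :: "real \<Rightarrow> real^'T" and K N :: nat
    and xs :: "nat \<Rightarrow> real" and ys :: "nat \<Rightarrow> real^'T"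
    and xt xt1 xt2 \<tau> :: real and a b c \<delta> :: "real^'T"
  assumes cpwl: "\<And>t. cpwl (\<lambda>x. f x $ t)"
    and interp: "\<And>i. i \<in> {1..N} \<Longrightarrow> f (xs i) = ys i"
    and between: "\<exists>i\<in>{1..N}. \<exists>j\<in>{1..N}. xs i < xt \<and> xt < xs j
                   \<and> (\<forall>k\<in>{1..N}. xs k \<notin> {xs i<..<xs j})"
    and knot_xt: "\<exists>t. knot (\<lambda>x. f x $ t) xt"
    and ord: "xt1 < xt" "xt < xt2"
    and knot_xt1: "\<exists>t. knot (\<lambda>x. f x $ t) xt1"
    and knot_xt2: "\<exists>t. knot (\<lambda>x. f x $ t) xt2"
    and closest: "\<And>t y. y \<in> {xt1<..<xt} \<union> {xt<..<xt2} \<Longrightarrow> \<not> knot (\<lambda>x. f x $ t) y"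
    and tau: "\<tau> = (xt - xt1) / (xt2 - xt1)"
    and slope_a: "(f has_vector_derivative a) (at_left xt1)"
    and slope_1: "\<And>y. y \<in> {xt1<..<xt} \<Longrightarrow> (f has_vector_derivative (b + \<delta>)) (at y)"
    and slope_2: "\<And>y. y \<in> {xt<..<xt2} \<Longrightarrow>
                    (f has_vector_derivative (b - (\<tau> / (1 - \<tau>)) *\<^sub>R \<delta>)) (at y)"
    and slope_c: "(f has_vector_derivative c) (at_right xt2)"
  shows "(let g = (\<lambda>y. if y \<in> {xt1..xt2}
                         then f xt1 + ((y - xt1) / (xt2 - xt1)) *\<^sub>R (f xt2 - f xt1)
                         else f y)
          in repcost K g \<le> repcost K f
             \<and> (\<not> aligned (a - b) (b - c) \<and> repcost K f < \<infinity> \<longrightarrow> repcost K g < repcost K f))"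
proof -
  define s where "s = (xt - xt1) / (xt2 - xt)"
  have s_eq: "s * (xt2 - xt) = xt - xt1"
    using ord by (simp add: s_def)
  have "1 - \<tau> = (xt2 - xt) / (xt2 - xt1)"
    using ord by (simp add: tau field_simps)
  then have tau_s: "\<tau> / (1 - \<tau>) = s"
    using ord by (simp add: tau s_def)
  have "continuous_on UNIV (\<lambda>y. \<chi> t. f y $ t)"
    using cpwl unfolding cpwl_def by (intro continuous_on_vec_lambda) blast
  then interpret knot_removal f xt1 xt xt2 s a b c \<delta>
    using ord s_eq knot_xt1 knot_xt knot_xt2 slope_a slope_1 slope_2 slope_c
    by unfold_locales (simp_all add: tau_s)
  have "(\<lambda>y. if y \<in> {xt1..xt2} then f xt1 + ((y - xt1) / (xt2 - xt1)) *\<^sub>R (f xt2 - f xt1) else f y) = chord"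
    by (simp add: fun_eq_iff chord_def)
  then show ?thesis
    using repcost_chord_le repcost_chord_less by simp
qed

end
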